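(* Let $\eta>0$, $\Psi(\boldsymbol x):=\log\sum_{i=1}^N\exp(\sqrt2\eta x_i)$ for $\boldsymbol x\in\mathbb{R}^N$, and $\log\Phi(\boldsymbol x,t)=-\eta^2t+\Psi(\boldsymbol x)$ for $(\boldsymbol x,t)\in\mathbb{R}^{N+1}$ (the logarithm of the total potential $\Phi(\boldsymbol x,t)=\sum_i\exp(\sqrt2\eta x_i-\eta^2t)$). Then $\Psi$ satisfies $(2\sqrt2\eta,2)$-generalized self-concordance on all of $\mathbb{R}^N$ with respect to $\|\cdot\|_\infty$, and $\log\Phi$ satisfies $(2\sqrt2\eta,2)$-generalized self-concordance on all of $\mathbb{R}^{N+1}$ with respect to $\|\cdot\|_*$, where $\|(\boldsymbol x,t)\|_*=\|\boldsymbol x\|_\infty$.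
   Context: A $C^3$ function $f$ on an open set $\mathrm{dom}(f)\subseteq\mathbb{R}^p$ satisfies $(M,2)$-generalized self-concordance in a (semi)norm $\|\cdot\|_*$ on $\mathcal C\subseteq\mathrm{dom}(f)$ if for all $\boldsymbol x\in\mathcal C$ and $\boldsymbol u,\boldsymbol v\in\mathbb{R}^p$: $|\nabla^3f(\boldsymbol x)[\boldsymbol u,\boldsymbol u,\boldsymbol v]|\le M\|\boldsymbol v\|_*\,\boldsymbol u^{\mathsf T}\nabla^2f(\boldsymbol x)\boldsymbol u$. It is global when $\mathcal C=\mathrm{dom}(f)$. *)

theory Defs
  imports "HOL-Analysis.Analysis"
begin

text \<open>(M,2)-generalized self-concordance of a C^3 function f on an open set D,
  on a subset C of D, with respect to a (semi)norm nrm.  The third derivative evaluated at [u,u,v] is f3 x v u u and the Hessian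
  form is f2 x u u.\<close>
definition gsc2 ::
  "real \<Rightarrow> ('a::euclidean_space \<Rightarrow> real) \<Rightarrow> 'a set \<Rightarrow> 'a set \<Rightarrow> ('a \<Rightarrow> real) \<Rightarrow> bool" where
  "gsc2 M nrm D C f \<longleftrightarrow> open D \<and> C \<subseteq> D \<and>
     (\<exists>(f1 :: 'a \<Rightarrow> ('a \<Rightarrow>\<^sub>L real)) (f2 :: 'a \<Rightarrow> ('a \<Rightarrow>\<^sub>L 'a \<Rightarrow>\<^sub>L real))
        (f3 :: 'a \<Rightarrow> ('a \<Rightarrow>\<^sub>L 'a \<Rightarrow>\<^sub>L 'a \<Rightarrow>\<^sub>L real)).
        (\<forall>x\<in>D. (f has_derivative blinfun_apply (f1 x)) (at x)
              \<and> (f1 has_derivative blinfun_apply (f2 x)) (at x)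
              \<and> (f2 has_derivative blinfun_apply (f3 x)) (at x))
        \<and> continuous_on D f3
        \<and> (\<forall>x\<in>C. \<forall>u v.
             \<bar>blinfun_apply (blinfun_apply (blinfun_apply (f3 x) v) u) u\<bar>
               \<le> M * nrm v * blinfun_apply (blinfun_apply (f2 x) u) u))"

definition Psi :: "real \<Rightarrow> real^'n \<Rightarrow> real" where
  "Psi \<eta> x = ln (\<Sum>i\<in>UNIV. exp (sqrt 2 * \<eta> * x $ i))"

definition logPhi :: "real \<Rightarrow> (real^'n) \<times> real \<Rightarrow> real" where
  "logPhi \<eta> p = - (\<eta> ^ 2) * snd p + Psi \<eta> (fst p)"

end

theory Submission
  imports Defs
begin

(* Psi is the log-sum-exp function with slope a = sqrt 2 * eta. Its k-th derivative at x is a^k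
   times the k-th joint cumulant of the coordinates under the softmax distribution
   p_i = exp (a x_i) / sum_j exp (a x_j): the Hessian is a^2 times a covariance and the third
   derivative a^3 times a third central moment. A coordinate of v deviates from its mean by at most
   2 ||v||_inf, so the third central moment along (v, u, u) is at most 2 ||v||_inf times the variance
   along u, which gives the bound with M = 2a. Generalized self-concordance survives precomposition
   with a linear map and the addition of a linear function, and log Phi is obtained from Psi by
   precomposing with (x, t) |-> x and adding -eta^2 t. *)

definition blinfun_of_basis :: "('a::euclidean_space \<Rightarrow> 'b::real_normed_vector) \<Rightarrow> 'a \<Rightarrow>\<^sub>L 'b" where
  "blinfun_of_basis g = (\<Sum>b\<in>Basis. blinfun_scaleR_left (g b) o\<^sub>L blinfun_inner_left b)"

lemma blinfun_of_basis_apply: "blinfun_of_basis g u = (\<Sum>b\<in>Basis. (u \<bullet> b) *\<^sub>R g b)"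
  by (simp add: blinfun_of_basis_def blinfun.sum_left)

lemma blinfun_of_basis_Basis: "b \<in> Basis \<Longrightarrow> blinfun_of_basis g b = g b"
  by (auto simp: blinfun_of_basis_apply inner_Basis if_distrib[of "\<lambda>c. c *\<^sub>R _"] sum.delta cong: if_cong)

lemma blinfun_of_basis_linear:
  assumes "linear g"
  shows "blinfun_of_basis g u = g u"
proof -
  have "g u = g (\<Sum>b\<in>Basis. (u \<bullet> b) *\<^sub>R b)" by (simp add: euclidean_representation)
  also have "\<dots> = blinfun_of_basis g u"
    using assms by (simp add: blinfun_of_basis_apply linear_sum linear_scale)
  finally show ?thesis ..
qed

lemma blinfun_of_basis_blinfun_apply: "blinfun_of_basis (blinfun_apply F) = F"
  by (rule blinfun_eqI, rule blinfun_of_basis_linear)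
     (rule bounded_linear.linear[OF blinfun.bounded_linear_right])

lemma blinfun_of_basis_apply_apply:
  fixes G :: "'a::euclidean_space \<Rightarrow> 'b::real_normed_vector \<Rightarrow>\<^sub>L 'c::real_normed_vector"
  shows "blinfun_of_basis G v u = blinfun_of_basis (\<lambda>w. G w u) v"
  by (simp add: blinfun_of_basis_apply blinfun.sum_left blinfun.scaleR_left)

lemma has_derivative_blinfun_componentwise:
  fixes F G :: "'x::real_normed_vector \<Rightarrow> 'a::euclidean_space \<Rightarrow>\<^sub>L 'b::real_normed_vector"
  assumes "\<And>b. b \<in> Basis \<Longrightarrow> ((\<lambda>x. F x b) has_derivative (\<lambda>h. G h b)) (at x within S)"
  shows "(F has_derivative G) (at x within S)"
proof -
  have rank_one: "bounded_linear (\<lambda>c. blinfun_scaleR_left c o\<^sub>L blinfun_inner_left b)" for b :: 'a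
    by (rule bounded_linear_compose[OF bounded_bilinear.bounded_linear_left[OF bounded_bilinear_blinfun_compose]
          bounded_linear_blinfun_scaleR_left])
  have "((\<lambda>x. blinfun_of_basis (F x)) has_derivative (\<lambda>h. blinfun_of_basis (G h))) (at x within S)"
    unfolding blinfun_of_basis_def
    by (intro has_derivative_sum bounded_linear.has_derivative[OF rank_one] assms)
  then show ?thesis by (simp add: blinfun_of_basis_blinfun_apply)
qed

lemma gsc2I:
  fixes f :: "'a::euclidean_space \<Rightarrow> real"
    and f' :: "'a \<Rightarrow> 'a \<Rightarrow> real" and f'' :: "'a \<Rightarrow> 'a \<Rightarrow> 'a \<Rightarrow> real"
    and f''' :: "'a \<Rightarrow> 'a \<Rightarrow> 'a \<Rightarrow> 'a \<Rightarrow> real"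
  assumes "open D" "C \<subseteq> D"
    and linear1: "\<And>x. x \<in> D \<Longrightarrow> linear (f' x)"
    and linear2: "\<And>x v. x \<in> D \<Longrightarrow> linear (f'' x v)" "\<And>x u. x \<in> D \<Longrightarrow> linear (\<lambda>v. f'' x v u)"
    and linear3: "\<And>x w v. x \<in> D \<Longrightarrow> linear (f''' x w v)" "\<And>x w u. x \<in> D \<Longrightarrow> linear (\<lambda>v. f''' x w v u)"
      "\<And>x v u. x \<in> D \<Longrightarrow> linear (\<lambda>w. f''' x w v u)"
    and deriv0: "\<And>x. x \<in> D \<Longrightarrow> (f has_derivative f' x) (at x)"
    and deriv1: "\<And>x u. x \<in> D \<Longrightarrow> ((\<lambda>x. f' x u) has_derivative (\<lambda>h. f'' x h u)) (at x)"
    and deriv2: "\<And>x v u. x \<in> D \<Longrightarrow> ((\<lambda>x. f'' x v u) has_derivative (\<lambda>h. f''' x h v u)) (at x)"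
    and cont3: "\<And>w v u. continuous_on D (\<lambda>x. f''' x w v u)"
    and bound: "\<And>x u v. x \<in> C \<Longrightarrow> \<bar>f''' x v u u\<bar> \<le> M * nrm v * f'' x u u"
  shows "gsc2 M nrm D C f"
proof -
  define f1 where "f1 x = blinfun_of_basis (f' x)" for x
  define f2 where "f2 x = blinfun_of_basis (\<lambda>v. blinfun_of_basis (f'' x v))" for x
  define f3 where "f3 x = blinfun_of_basis (\<lambda>w. blinfun_of_basis (\<lambda>v. blinfun_of_basis (f''' x w v)))" for x
  have f1_Basis: "f1 x b = f' x b" if "b \<in> Basis" for x b
    using that by (simp add: f1_def blinfun_of_basis_Basis)
  have f2_Basis: "f2 x b b' = f'' x b b'" if "b \<in> Basis" "b' \<in> Basis" for x b b'
    using that by (simp add: f2_def blinfun_of_basis_Basis)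
  have f3_Basis: "f3 x b b' b'' = f''' x b b' b''" if "b \<in> Basis" "b' \<in> Basis" "b'' \<in> Basis" for x b b' b''
    using that by (simp add: f3_def blinfun_of_basis_Basis)
  have f1_eq: "f1 x u = f' x u" if "x \<in> D" for x u
    using that by (simp add: f1_def blinfun_of_basis_linear linear1)
  have f2_eq: "f2 x v u = f'' x v u" if "x \<in> D" for x v u
    using that by (simp add: f2_def blinfun_of_basis_apply_apply blinfun_of_basis_linear linear2)
  have f3_eq: "f3 x w v u = f''' x w v u" if "x \<in> D" for x w v u
    using that by (simp add: f3_def blinfun_of_basis_apply_apply blinfun_of_basis_linear linear3)
  have "(f has_derivative f1 x) (at x)" if "x \<in> D" for x
    using deriv0[OF that] by (simp add: f1_eq[OF that, abs_def])
  moreover have "(f1 has_derivative f2 x) (at x)" if "x \<in> D" for x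
    by (rule has_derivative_blinfun_componentwise) (simp add: f1_Basis f2_eq that deriv1)
  moreover have "(f2 has_derivative f3 x) (at x)" if "x \<in> D" for x
    by (intro has_derivative_blinfun_componentwise) (simp add: f2_Basis f3_eq that deriv2)
  moreover have "continuous_on D f3"
    by (intro continuous_on_blinfun_componentwise) (simp add: f3_Basis cont3)
  moreover have "\<bar>f3 x v u u\<bar> \<le> M * nrm v * f2 x u u" if "x \<in> C" for x u v
    using that \<open>C \<subseteq> D\<close> bound by (auto simp: f2_eq f3_eq)
  ultimately show ?thesis
    unfolding gsc2_def using \<open>open D\<close> \<open>C \<subseteq> D\<close> by blast
qed

lemma gsc2_compose_linear:
  fixes L :: "'a::euclidean_space \<Rightarrow> 'b::euclidean_space"
  assumes "gsc2 M nrm D C f" and L: "linear L"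
  shows "gsc2 M (\<lambda>x. nrm (L x)) (L -` D) (L -` C) (\<lambda>x. f (L x))"
proof -
  obtain f1 :: "'b \<Rightarrow> 'b \<Rightarrow>\<^sub>L real" and f2 :: "'b \<Rightarrow> 'b \<Rightarrow>\<^sub>L 'b \<Rightarrow>\<^sub>L real"
    and f3 :: "'b \<Rightarrow> 'b \<Rightarrow>\<^sub>L 'b \<Rightarrow>\<^sub>L 'b \<Rightarrow>\<^sub>L real"
    where D: "open D" "C \<subseteq> D"
    and deriv: "\<And>y. y \<in> D \<Longrightarrow> (f has_derivative f1 y) (at y) \<and> (f1 has_derivative f2 y) (at y)
                   \<and> (f2 has_derivative f3 y) (at y)"
    and cont: "continuous_on D f3"
    and bound: "\<And>y u v. y \<in> C \<Longrightarrow> \<bar>f3 y v u u\<bar> \<le> M * nrm v * f2 y u u"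
    using assms(1) unfolding gsc2_def by blast
  have L_deriv: "(L has_derivative L) (at x)" for x
    using L by (rule linear_imp_has_derivative)
  have L_cont: "continuous_on (L -` D) L"
    using L by (simp add: linear_continuous_on linear_conv_bounded_linear)
  show ?thesis
  proof (rule gsc2I[where f' = "\<lambda>x u. f1 (L x) (L u)" and f'' = "\<lambda>x v u. f2 (L x) (L v) (L u)"
        and f''' = "\<lambda>x w v u. f3 (L x) (L w) (L v) (L u)"])
    show "open (L -` D)"
      using D L by (auto intro: continuous_open_vimage linear_continuous_at simp: linear_conv_bounded_linear)
    show "L -` C \<subseteq> L -` D"
      using D by auto
  qed (auto intro!: linearI has_derivative_compose[OF L_deriv] bounded_linear.has_derivative[OF blinfun.bounded_linear_left]
        continuous_on_compose2[OF _ L_cont] bounded_linear.continuous_on[OF blinfun.bounded_linear_left] cont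
        simp: deriv linear_add[OF L] linear_scale[OF L] blinfun.bilinear_simps bound)
qed

lemma gsc2_add_linear:
  fixes g :: "'a::euclidean_space \<Rightarrow> real"
  assumes "gsc2 M nrm D C f" and "linear g"
  shows "gsc2 M nrm D C (\<lambda>x. g x + f x)"
proof -
  obtain f1 :: "'a \<Rightarrow> 'a \<Rightarrow>\<^sub>L real" and f2 :: "'a \<Rightarrow> 'a \<Rightarrow>\<^sub>L 'a \<Rightarrow>\<^sub>L real"
    and f3 :: "'a \<Rightarrow> 'a \<Rightarrow>\<^sub>L 'a \<Rightarrow>\<^sub>L 'a \<Rightarrow>\<^sub>L real"
    where "open D" "C \<subseteq> D"
    and deriv: "\<And>y. y \<in> D \<Longrightarrow> (f has_derivative f1 y) (at y) \<and> (f1 has_derivative f2 y) (at y)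
                   \<and> (f2 has_derivative f3 y) (at y)"
    and "continuous_on D f3"
    and "\<And>y u v. y \<in> C \<Longrightarrow> \<bar>f3 y v u u\<bar> \<le> M * nrm v * f2 y u u"
    using assms(1) unfolding gsc2_def by blast
  moreover have "((\<lambda>x. g x + f x) has_derivative f1 x + blinfun_of_basis g) (at x)" if "x \<in> D" for x
    using has_derivative_add[OF linear_imp_has_derivative[OF \<open>linear g\<close>] conjunct1[OF deriv[OF that]]]
    by (simp add: plus_blinfun.rep_eq blinfun_of_basis_linear[OF \<open>linear g\<close>] add.commute fun_eq_iff)
  moreover have "((\<lambda>x. f1 x + blinfun_of_basis g) has_derivative f2 x) (at x)" if "x \<in> D" for x
    using deriv[OF that] by (blast intro: has_derivative_add_const)
  ultimately show ?thesis
    unfolding gsc2_def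
    by (intro conjI exI[of _ "\<lambda>x. f1 x + blinfun_of_basis g"] exI[of _ f2] exI[of _ f3]) auto
qed

definition log_sum_exp :: "real \<Rightarrow> real^'n \<Rightarrow> real" where
  "log_sum_exp a x = ln (\<Sum>i\<in>UNIV. exp (a * x $ i))"

definition softmax :: "real \<Rightarrow> real^'n \<Rightarrow> 'n \<Rightarrow> real" where
  "softmax a x i = exp (a * x $ i) / (\<Sum>j\<in>UNIV. exp (a * x $ j))"

definition softmax_mean :: "real \<Rightarrow> real^'n \<Rightarrow> ('n \<Rightarrow> real) \<Rightarrow> real" where
  "softmax_mean a x g = (\<Sum>i\<in>UNIV. softmax a x i * g i)"

lemma sum_exp_pos: "(\<Sum>i\<in>UNIV. exp (a * x $ i)) > (0::real)"
  by (rule sum_pos) auto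

lemma softmax_pos: "softmax a x i > 0"
  using sum_exp_pos[of a x] by (simp add: softmax_def)

lemma sum_softmax: "(\<Sum>i\<in>UNIV. softmax a x i) = 1"
  using sum_exp_pos[of a x] by (simp add: softmax_def flip: sum_divide_distrib)

lemma softmax_eq_exp: "softmax a x i = exp (a * x $ i - log_sum_exp a x)"
  using sum_exp_pos[of a x] by (simp add: softmax_def log_sum_exp_def exp_diff)

lemma softmax_mean_add: "softmax_mean a x (\<lambda>i. f i + g i) = softmax_mean a x f + softmax_mean a x g"
  by (simp add: softmax_mean_def distrib_left sum.distrib)

lemma softmax_mean_diff: "softmax_mean a x (\<lambda>i. f i - g i) = softmax_mean a x f - softmax_mean a x g"
  by (simp add: softmax_mean_def right_diff_distrib sum_subtractf)

lemma softmax_mean_mult_left: "softmax_mean a x (\<lambda>i. c * f i) = c * softmax_mean a x f"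
  by (simp add: softmax_mean_def sum_distrib_left mult_ac)

lemma softmax_mean_const: "softmax_mean a x (\<lambda>i. c) = c"
  by (simp add: softmax_mean_def sum_softmax flip: sum_distrib_right)

lemma abs_softmax_mean_le:
  assumes "\<And>i. \<bar>g i\<bar> \<le> h i"
  shows "\<bar>softmax_mean a x g\<bar> \<le> softmax_mean a x h"
proof -
  have "\<bar>softmax_mean a x g\<bar> \<le> (\<Sum>i\<in>UNIV. \<bar>softmax a x i * g i\<bar>)"
    unfolding softmax_mean_def by (rule sum_abs)
  also have "\<dots> \<le> softmax_mean a x h"
    unfolding softmax_mean_def
    using assms by (intro sum_mono) (simp add: abs_mult abs_of_pos softmax_pos mult_left_mono less_imp_le)
  finally show ?thesis .
qed

lemma continuous_on_softmax_mean: "continuous_on S (\<lambda>x. softmax_mean a x g)"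
proof -
  have "(\<Sum>j\<in>UNIV. exp (a * x $ j)) \<noteq> 0" for x :: "real^'n"
    using sum_exp_pos[of a x] by simp
  then show ?thesis
    unfolding softmax_mean_def softmax_def by (intro continuous_intros) auto
qed

definition lse_deriv1 :: "real \<Rightarrow> real^'n \<Rightarrow> real^'n \<Rightarrow> real" where
  "lse_deriv1 a x u = a * softmax_mean a x (vec_nth u)"

definition lse_deriv2 :: "real \<Rightarrow> real^'n \<Rightarrow> real^'n \<Rightarrow> real^'n \<Rightarrow> real" where
  "lse_deriv2 a x v u = a\<^sup>2 *
     (softmax_mean a x (\<lambda>i. v $ i * u $ i) - softmax_mean a x (vec_nth v) * softmax_mean a x (vec_nth u))"

definition lse_deriv3 :: "real \<Rightarrow> real^'n \<Rightarrow> real^'n \<Rightarrow> real^'n \<Rightarrow> real^'n \<Rightarrow> real" where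
  "lse_deriv3 a x w v u = a ^ 3 *
     (softmax_mean a x (\<lambda>i. w $ i * v $ i * u $ i)
      - softmax_mean a x (\<lambda>i. w $ i * v $ i) * softmax_mean a x (vec_nth u)
      - softmax_mean a x (\<lambda>i. w $ i * u $ i) * softmax_mean a x (vec_nth v)
      - softmax_mean a x (\<lambda>i. v $ i * u $ i) * softmax_mean a x (vec_nth w)
      + 2 * softmax_mean a x (vec_nth w) * softmax_mean a x (vec_nth v) * softmax_mean a x (vec_nth u))"

lemma has_derivative_log_sum_exp: "(log_sum_exp a has_derivative lse_deriv1 a x) (at x)"
  unfolding log_sum_exp_def lse_deriv1_def[abs_def]
  using sum_exp_pos[of a x]
  by (auto intro!: derivative_eq_intros bounded_linear.has_derivative[OF bounded_linear_vec_nth]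
      simp: fun_eq_iff softmax_mean_def softmax_def sum_divide_distrib sum_distrib_left field_simps)

lemma has_derivative_softmax:
  "((\<lambda>x. softmax a x i) has_derivative (\<lambda>h. a * softmax a x i * (h $ i - softmax_mean a x (vec_nth h)))) (at x)"
  unfolding softmax_eq_exp
  by (auto intro!: derivative_eq_intros has_derivative_log_sum_exp bounded_linear.has_derivative[OF bounded_linear_vec_nth]
      simp: fun_eq_iff lse_deriv1_def algebra_simps)

lemma has_derivative_softmax_mean:
  fixes x :: "real^'n"
  shows "((\<lambda>x. softmax_mean a x g) has_derivative
     (\<lambda>h. a * (softmax_mean a x (\<lambda>i. g i * h $ i) - softmax_mean a x g * softmax_mean a x (vec_nth h)))) (at x)"
proof -
  have "((\<lambda>x. \<Sum>i\<in>UNIV. softmax a x i * g i) has_derivative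
      (\<lambda>h. \<Sum>i\<in>UNIV. a * softmax a x i * (h $ i - softmax_mean a x (vec_nth h)) * g i)) (at x)"
    by (intro has_derivative_sum has_derivative_mult_left has_derivative_softmax)
  moreover have "(\<Sum>i\<in>UNIV. a * softmax a x i * (h $ i - m) * g i)
      = a * (softmax_mean a x (\<lambda>i. g i * h $ i) - softmax_mean a x g * m)" for h :: "real^'n" and m
    by (simp add: softmax_mean_def algebra_simps sum_subtractf sum_distrib_left sum_distrib_right)
  ultimately show ?thesis
    unfolding softmax_mean_def[of a _ g] by simp
qed

lemma has_derivative_lse_deriv1:
  "((\<lambda>x. lse_deriv1 a x u) has_derivative (\<lambda>h. lse_deriv2 a x h u)) (at x)"
  unfolding lse_deriv1_def lse_deriv2_def
  by (auto intro!: derivative_eq_intros has_derivative_softmax_mean simp: fun_eq_iff power2_eq_square mult_ac)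

lemma has_derivative_lse_deriv2:
  "((\<lambda>x. lse_deriv2 a x v u) has_derivative (\<lambda>h. lse_deriv3 a x h v u)) (at x)"
  unfolding lse_deriv2_def lse_deriv3_def
  by (auto intro!: derivative_eq_intros has_derivative_softmax_mean
      simp: fun_eq_iff power2_eq_square power3_eq_cube algebra_simps)

lemma lse_deriv2_commute: "lse_deriv2 a x v u = lse_deriv2 a x u v"
  by (simp add: lse_deriv2_def mult_ac)

lemma lse_deriv3_commute:
  "lse_deriv3 a x w v u = lse_deriv3 a x v w u" "lse_deriv3 a x w v u = lse_deriv3 a x w u v"
  by (simp_all add: lse_deriv3_def algebra_simps)

lemma linear_lse_derivs:
  "linear (lse_deriv1 a x)" "linear (lse_deriv2 a x v)" "linear (\<lambda>v. lse_deriv2 a x v u)"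
  "linear (lse_deriv3 a x w v)" "linear (\<lambda>v. lse_deriv3 a x w v u)" "linear (\<lambda>w. lse_deriv3 a x w v u)"
proof -
  show "linear (lse_deriv1 a x)"
    using has_derivative_linear[OF has_derivative_log_sum_exp] .
  show lin2: "linear (\<lambda>v. lse_deriv2 a x v u)" for u
    using has_derivative_linear[OF has_derivative_lse_deriv1] .
  show lin3: "linear (\<lambda>w. lse_deriv3 a x w v u)" for v u
    using has_derivative_linear[OF has_derivative_lse_deriv2] .
  have "lse_deriv2 a x v = (\<lambda>u. lse_deriv2 a x u v)"
    by (rule ext, rule lse_deriv2_commute)
  then show "linear (lse_deriv2 a x v)"
    using lin2[of v] by simp
  have "(\<lambda>v. lse_deriv3 a x w v u) = (\<lambda>v. lse_deriv3 a x v w u)"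
    by (rule ext, rule lse_deriv3_commute(1))
  then show "linear (\<lambda>v. lse_deriv3 a x w v u)"
    using lin3[of w u] by simp
  have "lse_deriv3 a x w v = (\<lambda>u. lse_deriv3 a x u w v)"
    using lse_deriv3_commute(2)[of a x w v] lse_deriv3_commute(1)[of a x w _ v] by auto
  then show "linear (lse_deriv3 a x w v)"
    using lin3[of w v] by simp
qed

lemma continuous_on_lse_deriv3: "continuous_on S (\<lambda>x. lse_deriv3 a x w v u)"
  unfolding lse_deriv3_def by (intro continuous_intros continuous_on_softmax_mean)

lemma lse_deriv2_diag:
  "lse_deriv2 a x u u = a\<^sup>2 * softmax_mean a x (\<lambda>i. (u $ i - softmax_mean a x (vec_nth u))\<^sup>2)"
proof -
  define m where "m = softmax_mean a x (vec_nth u)"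
  have "(u $ i - m)\<^sup>2 = u $ i * u $ i - (2 * m) * u $ i + m\<^sup>2" for i
    by (simp add: power2_eq_square algebra_simps)
  then show ?thesis
    by (simp add: lse_deriv2_def softmax_mean_add softmax_mean_diff softmax_mean_mult_left softmax_mean_const
        flip: m_def) (simp add: power2_eq_square)
qed

lemma lse_deriv3_diag:
  "lse_deriv3 a x v u u = a ^ 3 *
     softmax_mean a x (\<lambda>i. (u $ i - softmax_mean a x (vec_nth u))\<^sup>2 * (v $ i - softmax_mean a x (vec_nth v)))"
proof -
  define m where "m = softmax_mean a x (vec_nth u)"
  define n where "n = softmax_mean a x (vec_nth v)"
  have "(u $ i - m)\<^sup>2 * (v $ i - n) = v $ i * u $ i * u $ i - n * (u $ i * u $ i) - (2 * m) * (v $ i * u $ i)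
      + (2 * m * n) * u $ i + m\<^sup>2 * v $ i - m\<^sup>2 * n" for i
    by (simp add: power2_eq_square algebra_simps)
  then show ?thesis
    by (simp add: lse_deriv3_def softmax_mean_add softmax_mean_diff softmax_mean_mult_left softmax_mean_const
        flip: m_def n_def)
qed

lemma abs_lse_deriv3_le: "\<bar>lse_deriv3 a x v u u\<bar> \<le> 2 * \<bar>a\<bar> * infnorm v * lse_deriv2 a x u u"
proof -
  define m where "m = softmax_mean a x (vec_nth u)"
  define n where "n = softmax_mean a x (vec_nth v)"
  have "\<bar>n\<bar> \<le> infnorm v"
    using abs_softmax_mean_le[of "vec_nth v" "\<lambda>_. infnorm v"]
    by (simp add: n_def component_le_infnorm_cart softmax_mean_const)
  then have "\<bar>v $ i - n\<bar> \<le> 2 * infnorm v" for i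
    using component_le_infnorm_cart[of v i] by linarith
  then have "\<bar>(u $ i - m)\<^sup>2 * (v $ i - n)\<bar> \<le> 2 * infnorm v * (u $ i - m)\<^sup>2" for i
    using mult_left_mono[of _ _ "(u $ i - m)\<^sup>2"] by (simp add: abs_mult mult.commute)
  then have "\<bar>softmax_mean a x (\<lambda>i. (u $ i - m)\<^sup>2 * (v $ i - n))\<bar>
      \<le> softmax_mean a x (\<lambda>i. 2 * infnorm v * (u $ i - m)\<^sup>2)"
    by (rule abs_softmax_mean_le)
  then have "\<bar>a\<bar> ^ 3 * \<bar>softmax_mean a x (\<lambda>i. (u $ i - m)\<^sup>2 * (v $ i - n))\<bar>
      \<le> \<bar>a\<bar> ^ 3 * (2 * infnorm v * softmax_mean a x (\<lambda>i. (u $ i - m)\<^sup>2))"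
    by (simp add: softmax_mean_mult_left mult_left_mono)
  then show ?thesis
    by (simp add: lse_deriv2_diag lse_deriv3_diag abs_mult power_abs power2_eq_square power3_eq_cube mult_ac
        flip: m_def n_def)
qed

lemma gsc2_log_sum_exp: "gsc2 (2 * \<bar>a\<bar>) infnorm UNIV UNIV (log_sum_exp a)"
  by (rule gsc2I[where f' = "lse_deriv1 a" and f'' = "lse_deriv2 a" and f''' = "lse_deriv3 a"])
     (simp_all add: linear_lse_derivs has_derivative_log_sum_exp has_derivative_lse_deriv1
       has_derivative_lse_deriv2 continuous_on_lse_deriv3 abs_lse_deriv3_le)

theorem proposition6p9:
  fixes \<eta> :: real
  assumes "\<eta> > 0"
  shows "gsc2 (2 * sqrt 2 * \<eta>) infnorm UNIV UNIV (Psi \<eta> :: real^'n \<Rightarrow> real)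
         \<and> gsc2 (2 * sqrt 2 * \<eta>) (\<lambda>p. infnorm (fst p)) UNIV UNIV (logPhi \<eta> :: (real^'n) \<times> real \<Rightarrow> real)"
proof
  have "Psi \<eta> = log_sum_exp (sqrt 2 * \<eta>)"
    by (simp add: fun_eq_iff Psi_def log_sum_exp_def)
  moreover have "2 * sqrt 2 * \<eta> = 2 * \<bar>sqrt 2 * \<eta>\<bar>"
    using assms by simp
  ultimately show gsc2_Psi: "gsc2 (2 * sqrt 2 * \<eta>) infnorm UNIV UNIV (Psi \<eta> :: real^'n \<Rightarrow> real)"
    using gsc2_log_sum_exp by metis
  have "linear (\<lambda>p :: (real^'n) \<times> real. - (\<eta>\<^sup>2) * snd p)"
    by (rule linearI) (simp_all add: algebra_simps)
  from gsc2_add_linear[OF gsc2_compose_linear[OF gsc2_Psi linear_fst] this]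
  show "gsc2 (2 * sqrt 2 * \<eta>) (\<lambda>p. infnorm (fst p)) UNIV UNIV (logPhi \<eta> :: (real^'n) \<times> real \<Rightarrow> real)"
    by (simp add: logPhi_def[abs_def])
qed

end
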